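(* Let $a_n$ be the number of Dyck paths of semilength $n\ge 1$ in which every descent has odd length, and let $g_0(z)=\sum_{n\ge1}a_n z^{2n}$. Then $$g_0=\frac{z\,v_1}{v_1^2-z^2}.$$ Moreover, writing $Z=z^2$, $g_0$ is a power series in $Z$ satisfying $$g_0=\frac{Z(1+g_0)}{1-Z^2(1+g_0)^2},\qquad\text{equivalently}\qquad Z^2g_0^3+2Z^2g_0^2-(1-Z-Z^2)\,g_0+Z=0,$$ so that $g_0=Z+Z^2+2Z^3+5Z^4+12Z^5+30Z^6+79Z^7+\cdots$.
   Context: A Dyck path is a finite sequence of up-steps $(1,1)$ and down-steps $(1,-1)$ starting at height $0$, never going below height $0$, and ending at height $0$; its semilength is half its number of steps. Only nonempty paths are considered. A descent is a maximal run of consecutive down-steps; its length is the number of down-steps in it. Let $v_1=v_1(z)$ denote the unique root $u$ of the cubic $$z u^3+(z^2-1)u^2-z^3u+z^2=0$$ which is a Laurent series in $z$ with $z\,v_1(z)\to1$ as $z\to0$. Its expansion begins $v_1=\frac1z-z-z^5-2z^7-4z^9-10z^{11}-\cdots$. The other two roots of the cubic tend to $0$ as $z\to0$. *)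

theory Defs
  imports Complex_Main "HOL-Computational_Algebra.Formal_Laurent_Series"
begin

(* A lattice path is a bool list: True = up-step (1,1), False = down-step (1,-1). *)

definition path_height :: "bool list \<Rightarrow> int" where
  "path_height xs = int (count_list xs True) - int (count_list xs False)"

definition is_dyck :: "bool list \<Rightarrow> bool" where
  "is_dyck xs \<longleftrightarrow> (\<forall>k\<le>length xs. 0 \<le> path_height (take k xs)) \<and> path_height xs = 0"

definition is_descent :: "bool list \<Rightarrow> nat \<Rightarrow> nat \<Rightarrow> bool" where
  "is_descent xs i j \<longleftrightarrow> i \<le> j \<and> j < length xs \<and> (\<forall>k. i \<le> k \<and> k \<le> j \<longrightarrow> \<not> xs ! k)
     \<and> (i = 0 \<or> xs ! (i - 1)) \<and> (j + 1 = length xs \<or> xs ! (j + 1))"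

definition all_descents_odd :: "bool list \<Rightarrow> bool" where
  "all_descents_odd xs \<longleftrightarrow> (\<forall>i j. is_descent xs i j \<longrightarrow> odd (j - i + 1))"

definition a_odd :: "nat \<Rightarrow> nat" where
  "a_odd n = card {xs. length xs = 2 * n \<and> is_dyck xs \<and> all_descents_odd xs}"

definition cubic_v :: "real fls \<Rightarrow> real fls" where
  "cubic_v u = fls_X * u ^ 3 + (fls_X ^ 2 - 1) * u ^ 2 - fls_X ^ 3 * u + fls_X ^ 2"

(* v_1: the unique Laurent-series root with z * v_1 \<rightarrow> 1, i.e. leading term z^{-1} *)
definition v1 :: "real fls" where
  "v1 = (THE u. cubic_v u = 0 \<and> u \<noteq> 0 \<and> fls_subdegree u = -1 \<and> fls_nth u (-1) = 1)"

definition g0 :: "real fls" where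
  "g0 = fps_to_fls (Abs_fps (\<lambda>k. if even k \<and> k > 0 then real (a_odd (k div 2)) else 0))"

(* the same series as a power series in Z = z^2: G(Z) = sum_{n\<ge>1} a_n Z^n *)
definition G0 :: "real fps" where
  "G0 = Abs_fps (\<lambda>n. if n = 0 then 0 else real (a_odd n))"

end

theory Submission
  imports Defs "HOL-Library.Disjoint_Sets"
begin

text \<open>
  A nonempty Dyck path all of whose descents are odd ends with a descent of odd length k.
  If k = 1 it is p U D for a shorter such path p. If k \<ge> 3, cutting at the last up-steps
  that leave heights 0 and 1 writes it uniquely as p1 U p2 U q D D, where p1, p2, q are
  such paths and q (the rest of the path with k - 2 of the final down-steps) is nonempty.
  Hence F = 1 + G, with G the series of the a(n) in Z, satisfies F = 1 + Z F + Z^2 F^2 G,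
  i.e. G (1 - Z^2 F^2) = Z F.

  After substituting Z = z^2, the Laurent series u = 1 / (z F(z^2)) has leading term 1/z and
  satisfies the cubic. It is the only root with this leading term: for two such roots u, u'
  the quotient of the difference of the cubics by u - u', multiplied by z, has constant
  term 1. Solving u = 1 / (z (1 + g0)) for g0 gives g0 = z u / (u^2 - z^2).
\<close>

definition graded_product :: "(nat \<Rightarrow> 'a set) \<Rightarrow> (nat \<Rightarrow> 'b set) \<Rightarrow> nat \<Rightarrow> ('a \<times> 'b) set" where
  "graded_product A B n = (\<Union>i\<le>n. A i \<times> B (n - i))"

definition counting_fps :: "(nat \<Rightarrow> 'a set) \<Rightarrow> real fps" where
  "counting_fps A = Abs_fps (\<lambda>n. real (card (A n)))"

lemma finite_graded_product:
  "(\<And>i. finite (A i)) \<Longrightarrow> (\<And>i. finite (B i)) \<Longrightarrow> finite (graded_product A B n)"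
  by (simp add: graded_product_def)

lemma card_graded_product:
  assumes "disjoint_family A" "\<And>i. finite (A i)" "\<And>i. finite (B i)"
  shows "card (graded_product A B n) = (\<Sum>i\<le>n. card (A i) * card (B (n - i)))"
  unfolding graded_product_def
proof (subst card_UN_disjoint)
  show "\<forall>i\<in>{..n}. \<forall>j\<in>{..n}. i \<noteq> j \<longrightarrow> A i \<times> B (n - i) \<inter> A j \<times> B (n - j) = {}"
    using assms(1) by (auto simp: disjoint_family_on_def)
qed (simp_all add: assms card_cartesian_product)

lemma counting_fps_graded_product:
  assumes "disjoint_family A" "\<And>i. finite (A i)" "\<And>i. finite (B i)"
  shows "counting_fps (graded_product A B) = counting_fps A * counting_fps B"
  by (rule fps_ext)
    (simp add: counting_fps_def fps_mult_nth card_graded_product[OF assms] atLeast0AtMost)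

lemma fps_compose_X_power_nth:
  fixes f :: "'a::comm_ring_1 fps"
  assumes "0 < k"
  shows "(f oo fps_X ^ k) $ n = (if k dvd n then f $ (n div k) else 0)"
proof -
  have "(f oo fps_X ^ k) $ n = (\<Sum>i=0..n. if i = n div k \<and> k dvd n then f $ i else 0)"
    unfolding fps_compose_nth power_mult[symmetric] fps_X_power_nth
    by (intro sum.cong refl) (use assms in auto)
  also have "\<dots> = (if k dvd n then f $ (n div k) else 0)"
    by (simp add: sum.delta)
  finally show ?thesis .
qed

lemma fls_subdegree_eq_minus_one_iff:
  fixes u :: "'a::field fls"
  shows "fls_subdegree u = -1 \<and> fls_nth u (-1) = 1 \<longleftrightarrow> (\<exists>a. a $ 0 = 1 \<and> fls_X * u = fps_to_fls a)"
proof
  assume u: "fls_subdegree u = -1 \<and> fls_nth u (-1) = 1"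
  then have "u \<noteq> 0" by auto
  with u have "fls_subdegree (fls_X * u) = 0"
    by (simp add: fls_subdegree_mult_fls_X(1))
  then have "fps_to_fls (fls_regpart (fls_X * u)) = fls_X * u"
    by (intro fls_regpart_to_fls_trivial) simp
  moreover have "fls_regpart (fls_X * u) $ 0 = 1" using u by (simp add: fls_X_times_conv_shift(1))
  ultimately show "\<exists>a. a $ 0 = 1 \<and> fls_X * u = fps_to_fls a" by metis
next
  assume "\<exists>a. a $ 0 = 1 \<and> fls_X * u = fps_to_fls a"
  then obtain a where a: "a $ 0 = 1" "fls_shift (-1) u = fps_to_fls a"
    by (auto simp: fls_X_times_conv_shift(1))
  then have "u = fls_shift 1 (fps_to_fls a)" by (metis fls_shift_fls_shift fls_shift_0 add.right_inverse)
  moreover have "fps_to_fls a \<noteq> 0" "fls_subdegree (fps_to_fls a) = 0"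
    using a(1) by (auto simp: fls_subdegree_fls_to_fps subdegree_eq_0_iff)
  ultimately show "fls_subdegree u = -1 \<and> fls_nth u (-1) = 1" using a(1) by simp
qed

lemma functional_equation_imp_inverse_form:
  fixes z g :: "'a::field"
  assumes "g * (1 - z ^ 4 * (1 + g) ^ 2) = z ^ 2 * (1 + g)"
    and "z \<noteq> 0" "1 + g \<noteq> 0" "1 - z ^ 4 * (1 + g) ^ 2 \<noteq> 0"
  shows "g = z * inverse (z * (1 + g)) / (inverse (z * (1 + g)) ^ 2 - z ^ 2)"
proof -
  define w where "w = z * (1 + g)"
  have w: "w \<noteq> 0" "1 - z ^ 2 * w ^ 2 \<noteq> 0"
    using assms(2-4) by (simp_all add: w_def power_mult_distrib flip: power_add)
  have "z * inverse w / (inverse w ^ 2 - z ^ 2) = z * w / (1 - z ^ 2 * w ^ 2)"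
    using w by (simp add: field_simps) algebra
  also have "\<dots> = z ^ 2 * (1 + g) / (1 - z ^ 4 * (1 + g) ^ 2)"
    by (simp add: w_def power_mult_distrib power2_eq_square power4_eq_xxxx algebra_simps)
  also have "\<dots> = g" using assms(1,4) by (simp add: field_simps)
  finally show ?thesis by (simp add: w_def)
qed

section \<open>Heights of lattice paths\<close>

lemma path_height_simps [simp]:
  "path_height [] = 0"
  "path_height (x # xs) = (if x then 1 else -1) + path_height xs"
  "path_height (xs @ ys) = path_height xs + path_height ys"
  by (auto simp: path_height_def)

lemma path_height_replicate_False [simp]: "path_height (replicate k False) = - int k"
  by (induction k) auto

fun nonneg_from :: "int \<Rightarrow> bool list \<Rightarrow> bool" where
  "nonneg_from h [] \<longleftrightarrow> 0 \<le> h"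
| "nonneg_from h (x # xs) \<longleftrightarrow> 0 \<le> h \<and> nonneg_from (h + (if x then 1 else -1)) xs"

lemma nonneg_from_iff: "nonneg_from h xs \<longleftrightarrow> (\<forall>k\<le>length xs. 0 \<le> h + path_height (take k xs))"
proof (induction xs arbitrary: h)
  case (Cons x xs)
  have "(\<forall>k\<le>length (x # xs). 0 \<le> h + path_height (take k (x # xs))) \<longleftrightarrow>
        0 \<le> h \<and> (\<forall>k\<le>length xs. 0 \<le> h + path_height (take (Suc k) (x # xs)))"
    by (auto simp: All_less_Suc2[where P = "\<lambda>k. 0 \<le> h + path_height (take k (x # xs))", unfolded less_Suc_eq_le])
  then show ?case using Cons[of "h + (if x then 1 else -1)"] by (simp add: algebra_simps)
qed simp

lemma is_dyck_iff_nonneg_from: "is_dyck xs \<longleftrightarrow> nonneg_from 0 xs \<and> path_height xs = 0"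
  by (simp add: is_dyck_def nonneg_from_iff)

lemma is_dyck_length: "is_dyck xs \<Longrightarrow> length xs = 2 * count_list xs True"
proof -
  have "count_list xs True + count_list xs False = length xs" by (induction xs) auto
  then show "is_dyck xs \<Longrightarrow> length xs = 2 * count_list xs True"
    by (simp add: is_dyck_def path_height_def)
qed

lemma nonneg_from_start: "nonneg_from h xs \<Longrightarrow> 0 \<le> h"
  by (cases xs) auto

lemma nonneg_from_end: "nonneg_from h xs \<Longrightarrow> 0 \<le> h + path_height xs"
proof (induction xs arbitrary: h)
  case (Cons x xs)
  then have "0 \<le> (h + (if x then 1 else -1)) + path_height xs" by simp
  then show ?case by (simp add: algebra_simps)
qed simp

lemma nonneg_from_append:
  "nonneg_from h (xs @ ys) \<longleftrightarrow> nonneg_from h xs \<and> nonneg_from (h + path_height xs) ys"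
  by (induction xs arbitrary: h) (auto simp: algebra_simps dest: nonneg_from_start)

lemma nonneg_from_mono: "nonneg_from h xs \<Longrightarrow> h \<le> h' \<Longrightarrow> nonneg_from h' xs"
  by (induction xs arbitrary: h h') auto

lemma nonneg_from_replicate_False: "nonneg_from h (replicate k False) \<longleftrightarrow> int k \<le> h"
  by (induction k arbitrary: h) auto

lemma last_exit_split:
  assumes "nonneg_from 0 w" "1 \<le> path_height w"
  obtains p r where "w = p @ True # r" "is_dyck p" "nonneg_from 0 r" "path_height r = path_height w - 1"
proof -
  have "\<exists>p r. w = p @ True # r \<and> is_dyck p \<and> nonneg_from 0 r \<and> path_height r = path_height w - 1"
    using assms
  proof (induction w rule: rev_induct)
    case (snoc x w)
    have w: "nonneg_from 0 w" using snoc.prems by (simp add: nonneg_from_append)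
    show ?case
    proof (cases "1 \<le> path_height w")
      case True
      then obtain p r where "w = p @ True # r" "is_dyck p" "nonneg_from 0 r" "path_height r = path_height w - 1"
        using snoc.IH w by blast
      moreover have "nonneg_from 0 (r @ [x])"
        using calculation snoc.prems True by (auto simp: nonneg_from_append split: if_splits)
      ultimately show ?thesis by (intro exI[of _ p] exI[of _ "r @ [x]"]) auto
    next
      case False
      with nonneg_from_end[OF w] have "path_height w = 0" by simp
      moreover from this have x using snoc.prems by (auto split: if_splits)
      ultimately show ?thesis using w by (intro exI[of _ w] exI[of _ "[]"]) (auto simp: is_dyck_iff_nonneg_from)
    qed
  qed simp
  then show thesis using that by blast
qed

lemma last_exit_split2:
  assumes "nonneg_from 0 w" "2 \<le> path_height w"
  obtains p1 p2 r where "w = p1 @ True # p2 @ True # r" "is_dyck p1" "is_dyck p2"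
    "nonneg_from 0 r" "path_height r = path_height w - 2"
proof -
  from assms(2) have "1 \<le> path_height w" by simp
  with assms(1) obtain p1 r1 where
    r1: "w = p1 @ True # r1" "is_dyck p1" "nonneg_from 0 r1" "path_height r1 = path_height w - 1"
    by (rule last_exit_split)
  from r1(4) assms(2) have "1 \<le> path_height r1" by simp
  with r1(3) obtain p2 r where
    r: "r1 = p2 @ True # r" "is_dyck p2" "nonneg_from 0 r" "path_height r = path_height r1 - 1"
    by (rule last_exit_split)
  show thesis
  proof (rule that)
    show "w = p1 @ True # p2 @ True # r" using r1(1) r(1) by simp
    show "path_height r = path_height w - 2" using r1(4) r(4) by simp
  qed (fact r1(2) r(2,3))+
qed

lemma last_exit_unique:
  assumes "xs @ True # ys = xs' @ True # ys'" "path_height xs = path_height xs'"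
    "nonneg_from 0 ys" "nonneg_from 0 ys'"
  shows "xs = xs'"
  using assms
proof (induction xs arbitrary: xs')
  case Nil
  show ?case
  proof (cases xs')
    case (Cons a t)
    with Nil have "ys = t @ True # ys'" by simp
    with Nil.prems have "0 \<le> path_height t" by (auto simp: nonneg_from_append dest: nonneg_from_end)
    with Nil.prems Cons show ?thesis by auto
  qed simp
next
  case (Cons a xs)
  show ?case
  proof (cases xs')
    case Nil
    with Cons have "ys' = xs @ True # ys" by simp
    with Cons.prems have "0 \<le> path_height xs" by (auto simp: nonneg_from_append dest: nonneg_from_end)
    with Cons.prems Nil show ?thesis by auto
  next
    case (Cons b t)
    with Cons.prems Cons.IH[of t] show ?thesis by auto
  qed
qed

lemma split_last_True: "(\<exists>k. xs = replicate k False) \<or> (\<exists>r k. xs = r @ True # replicate k False)"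
proof (induction xs rule: rev_induct)
  case (snoc x xs)
  show ?case
  proof (cases x)
    case True
    then have "xs @ [x] = xs @ True # replicate 0 False" by simp
    then show ?thesis by blast
  next
    case False
    from snoc.IH show ?thesis
    proof (elim disjE exE)
      fix k assume "xs = replicate k False"
      then have "xs @ [x] = replicate (Suc k) False" using False by (simp add: replicate_append_same)
      then show ?thesis by blast
    next
      fix r k assume "xs = r @ True # replicate k False"
      then have "xs @ [x] = r @ True # replicate (Suc k) False" using False by (simp add: replicate_append_same)
      then show ?thesis by blast
    qed
  qed
qed simp

lemma dyck_last_descent:
  assumes "is_dyck q" "q \<noteq> []"
  obtains r k where "q = r @ True # replicate k False" "1 \<le> k" "nonneg_from 0 r" "path_height r = int k - 1"
proof -
  have q: "nonneg_from 0 q" "path_height q = 0" using assms(1) by (auto simp: is_dyck_iff_nonneg_from)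
  from split_last_True[of q] assms(2) q obtain r k where qr: "q = r @ True # replicate k False"
    by (auto simp: nonneg_from_replicate_False)
  with q have "nonneg_from 0 r" "path_height r = int k - 1" by (auto simp: nonneg_from_append)
  moreover from this have "1 \<le> k" using nonneg_from_end by fastforce
  ultimately show thesis using that qr by blast
qed

lemma is_descent_append_True_left:
  "j < length xs \<Longrightarrow> is_descent (xs @ True # ys) i j \<longleftrightarrow> is_descent xs i j"
  unfolding is_descent_def by (auto simp: nth_append)

lemma is_descent_append_True_right:
  "is_descent (xs @ True # ys) (i + Suc (length xs)) (j + Suc (length xs)) \<longleftrightarrow> is_descent ys i j"
proof -
  have shift: "(\<forall>k. i + c \<le> k \<and> k \<le> j + c \<longrightarrow> P k) \<longleftrightarrow> (\<forall>k. i \<le> k \<and> k \<le> j \<longrightarrow> P (k + c))"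
    for c and P :: "nat \<Rightarrow> bool"
  proof
    assume H: "\<forall>k. i \<le> k \<and> k \<le> j \<longrightarrow> P (k + c)"
    show "\<forall>k. i + c \<le> k \<and> k \<le> j + c \<longrightarrow> P k"
    proof (intro allI impI)
      fix k assume "i + c \<le> k \<and> k \<le> j + c"
      then have "i \<le> k - c \<and> k - c \<le> j" "k - c + c = k" by arith+
      then show "P k" using H by metis
    qed
  qed simp
  have at: "(xs @ True # ys) ! (k + Suc (length xs)) = ys ! k" for k
    by (simp add: nth_append)
  show ?thesis
    unfolding is_descent_def shift at by (cases i) (simp_all add: nth_append)
qed

lemma is_descent_avoids_True: "is_descent w i j \<Longrightarrow> w ! n \<Longrightarrow> j < n \<or> n < i"
  unfolding is_descent_def by (meson not_le)

lemma is_descent_append_True: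
  "is_descent (xs @ True # ys) i j \<longleftrightarrow>
    (j < length xs \<and> is_descent xs i j) \<or>
    (\<exists>i' j'. i = i' + Suc (length xs) \<and> j = j' + Suc (length xs) \<and> is_descent ys i' j')"
  (is "_ \<longleftrightarrow> ?left \<or> ?right")
proof
  let ?n = "Suc (length xs)"
  assume d: "is_descent (xs @ True # ys) i j"
  then have "i \<le> j" by (simp add: is_descent_def)
  with is_descent_avoids_True[OF d, of "length xs"] consider "j < length xs" | "?n \<le> i" by force
  then show "?left \<or> ?right"
  proof cases
    case 1
    with d show ?thesis by (simp add: is_descent_append_True_left)
  next
    case 2
    with \<open>i \<le> j\<close> have "i = (i - ?n) + ?n" "j = (j - ?n) + ?n" by simp_all
    with d show ?thesis by (metis is_descent_append_True_right)
  qed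
next
  assume "?left \<or> ?right"
  then show "is_descent (xs @ True # ys) i j"
  proof (elim disjE exE conjE)
    fix i' j' assume "i = i' + Suc (length xs)" "j = j' + Suc (length xs)" "is_descent ys i' j'"
    then show ?thesis by (simp only: is_descent_append_True_right)
  qed (simp add: is_descent_append_True_left)
qed

lemma all_descents_odd_append_True:
  "all_descents_odd (xs @ True # ys) \<longleftrightarrow> all_descents_odd xs \<and> all_descents_odd ys"
proof -
  let ?n = "Suc (length xs)"
  have "is_descent xs i j \<Longrightarrow> j < length xs" for i j
    by (simp add: is_descent_def)
  then have "all_descents_odd (xs @ True # ys) \<longleftrightarrow>
      (\<forall>i j. is_descent xs i j \<longrightarrow> odd (j - i + 1)) \<and>
      (\<forall>i j. is_descent ys i j \<longrightarrow> odd (j + ?n - (i + ?n) + 1))"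
    unfolding all_descents_odd_def is_descent_append_True by blast
  then show ?thesis
    unfolding all_descents_odd_def by (simp only: add_diff_cancel_right)
qed

lemma is_descent_replicate_False: "is_descent (replicate k False) i j \<longleftrightarrow> i = 0 \<and> j + 1 = k"
proof
  assume "is_descent (replicate k False) i j"
  then have "i \<le> j" "j < k" "i = 0 \<or> replicate k False ! (i - 1)"
    "j + 1 = k \<or> replicate k False ! (j + 1)"
    by (auto simp: is_descent_def)
  then show "i = 0 \<and> j + 1 = k" by (cases "i = 0"; cases "j + 1 = k") auto
qed (auto simp: is_descent_def)

lemma all_descents_odd_replicate_False: "all_descents_odd (replicate k False) \<longleftrightarrow> k = 0 \<or> odd k"
  unfolding all_descents_odd_def is_descent_replicate_False by (cases k) auto

section \<open>Decomposition of Dyck paths with odd descents\<close>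

definition odd_dyck :: "bool list \<Rightarrow> bool" where
  "odd_dyck xs \<longleftrightarrow> is_dyck xs \<and> all_descents_odd xs"

definition glue_paths :: "bool list \<times> bool list \<times> bool list \<Rightarrow> bool list" where
  "glue_paths = (\<lambda>(p1, p2, q). p1 @ True # p2 @ True # q @ [False, False])"

lemma odd_dyck_Nil [simp]: "odd_dyck []"
  using all_descents_odd_replicate_False[of 0] by (simp add: odd_dyck_def is_dyck_iff_nonneg_from)

lemma odd_dyck_append_peak: "odd_dyck p \<Longrightarrow> odd_dyck (p @ [True, False])"
  using all_descents_odd_append_True[of p "[False]"] all_descents_odd_replicate_False[of 1]
  by (auto simp: odd_dyck_def is_dyck_iff_nonneg_from nonneg_from_append)

lemma all_descents_odd_append_two_downs:
  assumes "is_dyck q" "q \<noteq> []"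
  shows "all_descents_odd (q @ [False, False]) \<longleftrightarrow> all_descents_odd q"
proof -
  obtain r k where q: "q = r @ True # replicate k False" "1 \<le> k"
    using dyck_last_descent[OF assms] by blast
  have "q @ [False, False] = r @ True # replicate (k + 2) False"
    unfolding q(1) replicate_add by (simp add: numeral_2_eq_2)
  then have "all_descents_odd (q @ [False, False]) \<longleftrightarrow> all_descents_odd r \<and> odd (k + 2)"
    by (simp only: all_descents_odd_append_True all_descents_odd_replicate_False) simp
  moreover have "all_descents_odd q \<longleftrightarrow> all_descents_odd r \<and> odd k"
    using q by (simp add: all_descents_odd_append_True all_descents_odd_replicate_False)
  ultimately show ?thesis by simp
qed

lemma odd_dyck_glue_paths:
  assumes "odd_dyck p1" "odd_dyck p2" "odd_dyck q" "q \<noteq> []"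
  shows "odd_dyck (glue_paths (p1, p2, q))"
proof -
  have d: "nonneg_from 0 p1" "path_height p1 = 0" "nonneg_from 0 p2" "path_height p2 = 0"
    "nonneg_from 0 q" "path_height q = 0"
    using assms by (auto simp: odd_dyck_def is_dyck_iff_nonneg_from)
  then have "nonneg_from 1 p2" "nonneg_from 2 q" using nonneg_from_mono by auto
  with d have "is_dyck (glue_paths (p1, p2, q))"
    by (simp add: glue_paths_def is_dyck_iff_nonneg_from nonneg_from_append)
  moreover have "all_descents_odd (glue_paths (p1, p2, q))"
    using assms all_descents_odd_append_two_downs[of q]
    by (simp add: glue_paths_def all_descents_odd_append_True odd_dyck_def)
  ultimately show ?thesis by (simp add: odd_dyck_def)
qed

lemma odd_dyck_cases:
  assumes "odd_dyck xs" "xs \<noteq> []"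
  shows "(\<exists>p. odd_dyck p \<and> xs = p @ [True, False]) \<or>
    (\<exists>p1 p2 q. odd_dyck p1 \<and> odd_dyck p2 \<and> odd_dyck q \<and> q \<noteq> [] \<and> xs = glue_paths (p1, p2, q))"
proof -
  have xs: "is_dyck xs" "all_descents_odd xs" using assms(1) by (auto simp: odd_dyck_def)
  obtain R k where R: "xs = R @ True # replicate k False" "1 \<le> k" "nonneg_from 0 R" "path_height R = int k - 1"
    using dyck_last_descent[OF xs(1) assms(2)] .
  have odd: "all_descents_odd R" "odd k"
    using xs(2) R(1,2) by (auto simp: all_descents_odd_append_True all_descents_odd_replicate_False)
  show ?thesis
  proof (cases "k = 1")
    case True
    with R odd have "odd_dyck R" "xs = R @ [True, False]"
      by (simp_all add: odd_dyck_def is_dyck_iff_nonneg_from)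
    then show ?thesis by blast
  next
    case False
    with odd(2) R(2) have "3 \<le> k" by presburger
    define m where "m = k - 2"
    with \<open>3 \<le> k\<close> odd(2) have m: "k = m + 2" "odd m" by presburger+
    with R(4) \<open>3 \<le> k\<close> have "2 \<le> path_height R" by simp
    with R(3) obtain p1 p2 r where
      r: "R = p1 @ True # p2 @ True # r" "is_dyck p1" "is_dyck p2" "nonneg_from 0 r"
        "path_height r = path_height R - 2"
      by (rule last_exit_split2)
    define q where "q = r @ True # replicate m False"
    have "replicate k False = replicate m False @ [False, False]"
      unfolding m(1) replicate_add by (simp add: numeral_2_eq_2)
    then have "xs = glue_paths (p1, p2, q)"
      unfolding R(1) r(1) by (simp add: glue_paths_def q_def)
    moreover have "all_descents_odd p1" "all_descents_odd p2" "all_descents_odd r"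
      using odd(1) r(1) by (simp_all add: all_descents_odd_append_True)
    moreover have "is_dyck q"
      using r(4,5) R(4) m(1) \<open>3 \<le> k\<close>
      by (simp add: q_def is_dyck_iff_nonneg_from nonneg_from_append nonneg_from_replicate_False)
    moreover have "all_descents_odd q"
      using \<open>all_descents_odd r\<close> m(2)
      by (simp add: q_def all_descents_odd_append_True all_descents_odd_replicate_False)
    ultimately show ?thesis
      using r(2,3) by (auto simp: odd_dyck_def q_def)
  qed
qed

lemma nonneg_from_dyck_up_dyck: "is_dyck p \<Longrightarrow> is_dyck q \<Longrightarrow> nonneg_from 0 (p @ True # q)"
  using nonneg_from_mono[of 0 q 1] by (simp add: is_dyck_iff_nonneg_from nonneg_from_append)

lemma glue_paths_inj: "inj_on glue_paths {(p1, p2, q). is_dyck p1 \<and> is_dyck p2 \<and> is_dyck q}"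
proof (rule inj_onI)
  fix x y
  assume "x \<in> {(p1, p2, q). is_dyck p1 \<and> is_dyck p2 \<and> is_dyck q}"
    and "y \<in> {(p1, p2, q). is_dyck p1 \<and> is_dyck p2 \<and> is_dyck q}"
    and "glue_paths x = glue_paths y"
  moreover obtain p1 p2 q p1' p2' q' where "x = (p1, p2, q)" "y = (p1', p2', q')"
    by (cases x, cases y) auto
  ultimately have dyck: "is_dyck p1" "is_dyck p2" "is_dyck q" "is_dyck p1'" "is_dyck p2'" "is_dyck q'"
    and e: "p1 @ True # p2 @ True # q = p1' @ True # p2' @ True # q'"
    and xy: "x = (p1, p2, q)" "y = (p1', p2', q')"
    by (auto simp: glue_paths_def)
  have "p1 = p1'"
    using last_exit_unique[OF e] dyck nonneg_from_dyck_up_dyck by (simp add: is_dyck_iff_nonneg_from)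
  with e have e2: "p2 @ True # q = p2' @ True # q'" by simp
  have "p2 = p2'"
    using last_exit_unique[OF e2] dyck by (simp add: is_dyck_iff_nonneg_from)
  with e2 \<open>p1 = p1'\<close> show "x = y" by (simp add: xy)
qed

lemma append_peak_neq_glue_paths: "p @ [True, False] \<noteq> glue_paths t"
proof
  assume "p @ [True, False] = glue_paths t"
  then have "rev (p @ [True, False]) = rev (glue_paths t)" by simp
  then show False by (cases t) (simp add: glue_paths_def)
qed

definition odd_dyck_paths :: "nat \<Rightarrow> bool list set" where
  "odd_dyck_paths n = {xs. length xs = 2 * n \<and> odd_dyck xs}"

definition nonempty_odd_dyck_paths :: "nat \<Rightarrow> bool list set" where
  "nonempty_odd_dyck_paths n = odd_dyck_paths n - {[]}"

definition odd_dyck_triples :: "nat \<Rightarrow> (bool list \<times> bool list \<times> bool list) set" where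
  "odd_dyck_triples n = {(p1, p2, q). odd_dyck p1 \<and> odd_dyck p2 \<and> odd_dyck q \<and> q \<noteq> []
     \<and> length (glue_paths (p1, p2, q)) = 2 * n}"

lemma finite_odd_dyck_paths: "finite (odd_dyck_paths n)"
  by (rule finite_subset[OF _ finite_lists_length_eq[of UNIV "2 * n"]]) (auto simp: odd_dyck_paths_def)

lemma finite_nonempty_odd_dyck_paths: "finite (nonempty_odd_dyck_paths n)"
  by (simp add: nonempty_odd_dyck_paths_def finite_odd_dyck_paths)

lemma disjoint_family_odd_dyck_paths: "disjoint_family odd_dyck_paths"
  by (auto simp: disjoint_family_on_def odd_dyck_paths_def)

lemma odd_dyck_paths_0: "odd_dyck_paths 0 = {[]}"
  by (auto simp: odd_dyck_paths_def)

lemma odd_dyck_paths_Suc: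
  "odd_dyck_paths (Suc n) = (\<lambda>p. p @ [True, False]) ` odd_dyck_paths n \<union> glue_paths ` odd_dyck_triples (Suc n)"
proof (intro equalityI subsetI)
  fix xs assume "xs \<in> odd_dyck_paths (Suc n)"
  then have xs: "odd_dyck xs" "length xs = 2 * Suc n" "xs \<noteq> []" by (auto simp: odd_dyck_paths_def)
  from odd_dyck_cases[OF xs(1,3)]
  show "xs \<in> (\<lambda>p. p @ [True, False]) ` odd_dyck_paths n \<union> glue_paths ` odd_dyck_triples (Suc n)"
  proof (elim disjE exE conjE)
    fix p assume "odd_dyck p" "xs = p @ [True, False]"
    with xs(2) show ?thesis by (auto simp: odd_dyck_paths_def)
  next
    fix p1 p2 q assume "odd_dyck p1" "odd_dyck p2" "odd_dyck q" "q \<noteq> []" "xs = glue_paths (p1, p2, q)"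
    with xs(2) show ?thesis unfolding odd_dyck_triples_def by blast
  qed
next
  fix xs assume "xs \<in> (\<lambda>p. p @ [True, False]) ` odd_dyck_paths n \<union> glue_paths ` odd_dyck_triples (Suc n)"
  then show "xs \<in> odd_dyck_paths (Suc n)"
    by (auto simp: odd_dyck_paths_def odd_dyck_triples_def odd_dyck_append_peak odd_dyck_glue_paths)
qed

lemma finite_odd_dyck_triples: "finite (odd_dyck_triples n)"
proof (rule finite_subset)
  let ?L = "{xs :: bool list. set xs \<subseteq> UNIV \<and> length xs \<le> 2 * n}"
  show "odd_dyck_triples n \<subseteq> ?L \<times> ?L \<times> ?L"
    by (auto simp: odd_dyck_triples_def glue_paths_def)
  show "finite (?L \<times> ?L \<times> ?L)"
    using finite_lists_length_le[of "UNIV :: bool set" "2 * n"] by simp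
qed

lemma card_odd_dyck_paths_Suc:
  "card (odd_dyck_paths (Suc n)) = card (odd_dyck_paths n) + card (odd_dyck_triples (Suc n))"
proof -
  have inj: "inj_on glue_paths (odd_dyck_triples (Suc n))"
    by (rule inj_on_subset[OF glue_paths_inj]) (auto simp: odd_dyck_triples_def odd_dyck_def)
  have "(\<lambda>p. p @ [True, False]) ` odd_dyck_paths n \<inter> glue_paths ` odd_dyck_triples (Suc n) = {}"
    using append_peak_neq_glue_paths by blast
  then show ?thesis
    unfolding odd_dyck_paths_Suc
    by (simp add: card_Un_disjoint finite_odd_dyck_paths finite_odd_dyck_triples card_image[OF inj]
        card_image inj_on_def)
qed

lemma odd_dyck_triples_small: "n \<le> 1 \<Longrightarrow> odd_dyck_triples n = {}"
  by (auto simp: odd_dyck_triples_def glue_paths_def)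

lemma odd_dyck_triples_Suc_Suc:
  "odd_dyck_triples (Suc (Suc m)) =
    graded_product odd_dyck_paths (graded_product odd_dyck_paths nonempty_odd_dyck_paths) m"
proof (intro equalityI subsetI)
  fix t assume "t \<in> odd_dyck_triples (Suc (Suc m))"
  then obtain p1 p2 q where t: "t = (p1, p2, q)" "odd_dyck p1" "odd_dyck p2" "odd_dyck q" "q \<noteq> []"
    "length p1 + length p2 + length q = 2 * m"
    by (auto simp: odd_dyck_triples_def glue_paths_def)
  moreover obtain a b c where "length p1 = 2 * a" "length p2 = 2 * b" "length q = 2 * c"
    using t(2-4) is_dyck_length unfolding odd_dyck_def by metis
  ultimately show "t \<in> graded_product odd_dyck_paths (graded_product odd_dyck_paths nonempty_odd_dyck_paths) m"
    unfolding graded_product_def nonempty_odd_dyck_paths_def odd_dyck_paths_def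
    by (intro UN_I[of a] SigmaI UN_I[of b]) auto
qed (auto simp: odd_dyck_triples_def glue_paths_def graded_product_def
    nonempty_odd_dyck_paths_def odd_dyck_paths_def)

lemma a_odd_eq_card: "a_odd n = card (odd_dyck_paths n)"
  by (simp add: a_odd_def odd_dyck_paths_def odd_dyck_def)

lemma card_nonempty_odd_dyck_paths:
  "card (nonempty_odd_dyck_paths n) = (if n = 0 then 0 else a_odd n)"
proof -
  have "nonempty_odd_dyck_paths n = (if n = 0 then {} else odd_dyck_paths n)"
    by (auto simp: nonempty_odd_dyck_paths_def odd_dyck_paths_def)
  then show ?thesis by (simp add: a_odd_eq_card)
qed

lemma G0_eq_counting_fps: "G0 = counting_fps nonempty_odd_dyck_paths"
  by (rule fps_ext) (simp add: G0_def counting_fps_def card_nonempty_odd_dyck_paths)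

lemma counting_fps_odd_dyck_paths: "counting_fps odd_dyck_paths = 1 + G0"
  by (rule fps_ext) (simp add: G0_def counting_fps_def a_odd_eq_card odd_dyck_paths_0)

lemma counting_fps_odd_dyck_triples:
  "counting_fps odd_dyck_triples = fps_X ^ 2 * ((1 + G0) * ((1 + G0) * G0))"
proof -
  have inner: "counting_fps (graded_product odd_dyck_paths nonempty_odd_dyck_paths) = (1 + G0) * G0"
    by (simp add: counting_fps_graded_product disjoint_family_odd_dyck_paths finite_odd_dyck_paths
        finite_nonempty_odd_dyck_paths counting_fps_odd_dyck_paths G0_eq_counting_fps)
  have outer: "counting_fps (graded_product odd_dyck_paths (graded_product odd_dyck_paths nonempty_odd_dyck_paths))
      = (1 + G0) * ((1 + G0) * G0)"
    by (simp add: counting_fps_graded_product disjoint_family_odd_dyck_paths finite_odd_dyck_paths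
        finite_nonempty_odd_dyck_paths finite_graded_product counting_fps_odd_dyck_paths inner)
  show ?thesis
  proof (rule fps_ext)
    fix n
    show "counting_fps odd_dyck_triples $ n = (fps_X ^ 2 * ((1 + G0) * ((1 + G0) * G0))) $ n"
    proof (cases "n \<le> 1")
      case True
      then show ?thesis by (simp add: counting_fps_def odd_dyck_triples_small fps_X_power_mult_nth)
    next
      case False
      then obtain m where "n = Suc (Suc m)" using less_imp_Suc_add[of 1 n] by auto
      then show ?thesis
        unfolding outer[symmetric] by (simp add: counting_fps_def odd_dyck_triples_Suc_Suc fps_X_power_mult_nth)
    qed
  qed
qed

lemma counting_fps_odd_dyck_paths_recurrence:
  "counting_fps odd_dyck_paths = 1 + fps_X * counting_fps odd_dyck_paths + counting_fps odd_dyck_triples"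
proof (rule fps_ext)
  fix n show "counting_fps odd_dyck_paths $ n =
    (1 + fps_X * counting_fps odd_dyck_paths + counting_fps odd_dyck_triples) $ n"
    by (cases n) (simp_all add: counting_fps_def odd_dyck_paths_0 odd_dyck_triples_small card_odd_dyck_paths_Suc)
qed

lemma G0_functional_equation: "G0 * (1 - fps_X ^ 2 * (1 + G0) ^ 2) = fps_X * (1 + G0)"
proof -
  have "1 + G0 = 1 + fps_X * (1 + G0) + fps_X ^ 2 * ((1 + G0) * ((1 + G0) * G0))"
    using counting_fps_odd_dyck_paths_recurrence
    unfolding counting_fps_odd_dyck_paths counting_fps_odd_dyck_triples .
  then show ?thesis by (simp add: algebra_simps power2_eq_square)
qed

lemma a_odd_Suc_Suc:
  "a_odd (Suc (Suc m)) = a_odd (Suc m) +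
    (\<Sum>i\<le>m. a_odd i * (\<Sum>j\<le>m - i. a_odd j * (if m - i - j = 0 then 0 else a_odd (m - i - j))))"
proof -
  have "card (odd_dyck_triples (Suc (Suc m))) = (\<Sum>i\<le>m. card (odd_dyck_paths i) *
      (\<Sum>j\<le>m - i. card (odd_dyck_paths j) * card (nonempty_odd_dyck_paths (m - i - j))))"
    by (simp add: odd_dyck_triples_Suc_Suc card_graded_product disjoint_family_odd_dyck_paths
        finite_odd_dyck_paths finite_nonempty_odd_dyck_paths finite_graded_product)
  then show ?thesis
    unfolding a_odd_eq_card card_odd_dyck_paths_Suc card_nonempty_odd_dyck_paths[unfolded a_odd_eq_card]
    by simp
qed

lemma a_odd_values: "map a_odd [1, 2, 3, 4, 5, 6, 7] = [1, 1, 2, 5, 12, 30, 79]"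
proof -
  have a0: "a_odd 0 = 1" and a1: "a_odd 1 = 1"
    using card_odd_dyck_paths_Suc[of 0]
    by (simp_all add: a_odd_eq_card odd_dyck_paths_0 odd_dyck_triples_small)
  have a2: "a_odd 2 = 1" using a_odd_Suc_Suc[of 0] a0 a1 by (simp add: eval_nat_numeral)
  have a3: "a_odd 3 = 2" using a_odd_Suc_Suc[of 1] a0 a1 a2 by (simp add: eval_nat_numeral)
  have a4: "a_odd 4 = 5" using a_odd_Suc_Suc[of 2] a0 a1 a2 a3 by (simp add: eval_nat_numeral)
  have a5: "a_odd 5 = 12" using a_odd_Suc_Suc[of 3] a0 a1 a2 a3 a4 by (simp add: eval_nat_numeral)
  have a6: "a_odd 6 = 30" using a_odd_Suc_Suc[of 4] a0 a1 a2 a3 a4 a5 by (simp add: eval_nat_numeral)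
  have a7: "a_odd 7 = 79" using a_odd_Suc_Suc[of 5] a0 a1 a2 a3 a4 a5 a6 by (simp add: eval_nat_numeral)
  show ?thesis using a1 a2 a3 a4 a5 a6 a7 by simp
qed

section \<open>The substitution Z = z^2 and the root v1\<close>

lemma g0_eq_compose: "g0 = fps_to_fls (G0 oo fps_X ^ 2)"
  unfolding g0_def by (intro arg_cong[where f = fps_to_fls] fps_ext) (auto simp: fps_compose_X_power_nth G0_def)

lemma G0_compose_functional_equation:
  "(G0 oo fps_X ^ 2) * (1 - fps_X ^ 4 * (1 + (G0 oo fps_X ^ 2)) ^ 2) = fps_X ^ 2 * (1 + (G0 oo fps_X ^ 2))"
proof -
  have X2: "(fps_X ^ 2 :: real fps) $ 0 = 0" by simp
  have "(G0 * (1 - fps_X ^ 2 * (1 + G0) ^ 2)) oo fps_X ^ 2 = (fps_X * (1 + G0)) oo fps_X ^ 2"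
    by (simp only: G0_functional_equation)
  then show ?thesis
    by (simp add: fps_compose_mult_distrib[OF X2] fps_compose_sub_distrib fps_compose_add_distrib
        fps_compose_power[OF X2, symmetric] power_mult[symmetric])
qed

definition cubic_fps :: "real fps \<Rightarrow> real fps" where
  "cubic_fps a = a ^ 3 + (fps_X ^ 2 - 1) * a ^ 2 - fps_X ^ 4 * a + fps_X ^ 4"

lemma cubic_v_conv_cubic_fps:
  assumes "fls_X * u = fps_to_fls a"
  shows "fls_X ^ 2 * cubic_v u = fps_to_fls (cubic_fps a)"
proof -
  have "fls_X ^ 2 * cubic_v u
      = (fls_X * u) ^ 3 + (fls_X ^ 2 - 1) * (fls_X * u) ^ 2 - fls_X ^ 4 * (fls_X * u) + fls_X ^ 4"
    unfolding cubic_v_def by (simp add: algebra_simps power2_eq_square power3_eq_cube power4_eq_xxxx)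
  then show ?thesis
    unfolding assms cubic_fps_def by (simp add: fls_times_fps_to_fls fps_to_fls_power)
qed

lemma cubic_fps_root_unique:
  assumes "cubic_fps a = 0" "cubic_fps b = 0" "a $ 0 = 1" "b $ 0 = 1"
  shows "a = b"
proof -
  define c where "c = a ^ 2 + a * b + b ^ 2 + (fps_X ^ 2 - 1) * (a + b) - fps_X ^ 4"
  have "(a - b) * c = cubic_fps a - cubic_fps b"
    unfolding c_def cubic_fps_def by (simp add: algebra_simps power2_eq_square power3_eq_cube)
  then have "(a - b) * c = 0" using assms(1,2) by simp
  moreover have "c $ 0 = 1"
    using assms(3,4) by (simp add: c_def power2_eq_square fps_X_power_mult_nth)
  ultimately show ?thesis by auto
qed

lemma cubic_fps_inverse_root:
  assumes "g * (1 - fps_X ^ 4 * (1 + g) ^ 2) = fps_X ^ 2 * (1 + g)" "g $ 0 = 0"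
  shows "cubic_fps (inverse (1 + g)) = 0"
proof -
  define p where "p = 1 + g"
  define b where "b = inverse p"
  have bp: "b * p = 1" using assms(2) by (simp add: b_def p_def inverse_mult_eq_1)
  have "cubic_fps b * p ^ 3
      = (b * p) ^ 3 + (fps_X ^ 2 - 1) * (b * p) ^ 2 * p - fps_X ^ 4 * (b * p) * p ^ 2 + fps_X ^ 4 * p ^ 3"
    unfolding cubic_fps_def by (simp add: algebra_simps power2_eq_square power3_eq_cube)
  also have "\<dots> = fps_X ^ 2 * (1 + g) - g * (1 - fps_X ^ 4 * (1 + g) ^ 2)"
    unfolding bp unfolding p_def by (simp add: algebra_simps power2_eq_square power3_eq_cube)
  also have "\<dots> = 0" using assms(1) by simp
  finally have "cubic_fps b * p ^ 3 = 0" .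
  moreover have "p \<noteq> 0" using assms(2) by (auto simp: p_def dest: arg_cong[where f = "\<lambda>f. f $ 0"])
  ultimately show ?thesis by (simp add: b_def p_def)
qed

lemma v1_eq: "v1 = inverse (fls_X * (1 + g0))"
proof -
  define Gz where "Gz = G0 oo fps_X ^ 2"
  define u0 where "u0 = inverse (fls_X * (1 + g0))"
  have "Gz $ 0 = 0" by (simp add: Gz_def G0_def)
  have "fls_X * u0 = inverse (fps_to_fls (1 + Gz))"
    by (simp add: u0_def g0_eq_compose Gz_def)
  also have "\<dots> = fps_to_fls (inverse (1 + Gz))"
    using \<open>Gz $ 0 = 0\<close> by (intro fls_inverse_fps_to_fls) (simp add: subdegree_eq_0_iff)
  finally have Xu0: "fls_X * u0 = fps_to_fls (inverse (1 + Gz))" .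
  have root: "cubic_fps (inverse (1 + Gz)) = 0"
    using cubic_fps_inverse_root G0_compose_functional_equation \<open>Gz $ 0 = 0\<close> unfolding Gz_def by blast
  have inv0: "inverse (1 + Gz) $ 0 = 1" using \<open>Gz $ 0 = 0\<close> by simp
  show ?thesis
    unfolding v1_def u0_def[symmetric]
  proof (rule the_equality)
    have "fls_X ^ 2 * cubic_v u0 = 0"
      by (simp add: cubic_v_conv_cubic_fps[OF Xu0] root)
    moreover have "fls_subdegree u0 = -1 \<and> fls_nth u0 (-1) = 1"
      using fls_subdegree_eq_minus_one_iff inv0 Xu0 by blast
    ultimately show "cubic_v u0 = 0 \<and> u0 \<noteq> 0 \<and> fls_subdegree u0 = -1 \<and> fls_nth u0 (-1) = 1"
      by auto
  next
    fix u assume u: "cubic_v u = 0 \<and> u \<noteq> 0 \<and> fls_subdegree u = -1 \<and> fls_nth u (-1) = 1"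
    then obtain a where a: "a $ 0 = 1" "fls_X * u = fps_to_fls a"
      using fls_subdegree_eq_minus_one_iff by blast
    with u have "cubic_fps a = 0"
      using cubic_v_conv_cubic_fps[OF a(2)] by simp
    then have "a = inverse (1 + Gz)" using root a(1) inv0 by (rule cubic_fps_root_unique)
    with a(2) Xu0 have "fls_X * u = fls_X * u0" by simp
    then show "u = u0" by simp
  qed
qed

lemma g0_functional_equation: "g0 * (1 - fls_X ^ 4 * (1 + g0) ^ 2) = fls_X ^ 2 * (1 + g0)"
  using arg_cong[OF G0_compose_functional_equation, of fps_to_fls]
  by (simp add: g0_eq_compose fls_times_fps_to_fls fps_to_fls_power)

lemma g0_eq_v1_formula: "g0 = fls_X * v1 / (v1 ^ 2 - fls_X ^ 2)"
proof -
  define Gz where "Gz = G0 oo fps_X ^ 2"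
  have "Gz $ 0 = 0" by (simp add: Gz_def G0_def)
  then have "(1 + Gz) $ 0 \<noteq> 0" "(1 - fps_X ^ 4 * (1 + Gz) ^ 2) $ 0 \<noteq> 0"
    by (simp_all add: fps_X_power_mult_nth)
  then have "fps_to_fls (1 + Gz) \<noteq> 0" "fps_to_fls (1 - fps_X ^ 4 * (1 + Gz) ^ 2) \<noteq> 0"
    by (metis fps_to_fls_eq_0_iff fps_zero_nth)+
  then have "1 + g0 \<noteq> 0" "1 - fls_X ^ 4 * (1 + g0) ^ 2 \<noteq> 0"
    by (simp_all add: g0_eq_compose Gz_def fls_times_fps_to_fls fps_to_fls_power)
  with g0_functional_equation show ?thesis
    unfolding v1_eq by (intro functional_equation_imp_inverse_form) simp_all
qed

theorem mainTheorem1: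
  shows "g0 = fls_X * v1 / (v1 ^ 2 - fls_X ^ 2)
    \<and> G0 = fps_X * (1 + G0) / (1 - fps_X ^ 2 * (1 + G0) ^ 2)
    \<and> fps_X ^ 2 * G0 ^ 3 + 2 * fps_X ^ 2 * G0 ^ 2 - (1 - fps_X - fps_X ^ 2) * G0 + fps_X = 0
    \<and> map a_odd [1, 2, 3, 4, 5, 6, 7] = [1, 1, 2, 5, 12, 30, 79]"
proof (intro conjI)
  have "(1 - fps_X ^ 2 * (1 + G0) ^ 2) $ 0 = 1" by (simp add: fps_X_power_mult_nth)
  then have "1 - fps_X ^ 2 * (1 + G0) ^ 2 \<noteq> 0" by (metis fps_zero_nth zero_neq_one)
  then show "G0 = fps_X * (1 + G0) / (1 - fps_X ^ 2 * (1 + G0) ^ 2)"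
    by (simp flip: G0_functional_equation)
  show "fps_X ^ 2 * G0 ^ 3 + 2 * fps_X ^ 2 * G0 ^ 2 - (1 - fps_X - fps_X ^ 2) * G0 + fps_X = 0"
    using G0_functional_equation by (simp add: algebra_simps power2_eq_square power3_eq_cube)
qed (fact g0_eq_v1_formula a_odd_values)+

end
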